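(* Regard $\phi_0(a,\beta_0,r,\mu)=1-\dfrac{(a\beta_0-\sqrt r)^2}{a\mu+r}$ as a smooth function of positive parameters $a,\beta_0,r,\mu$. For every parameter value $(A,r,\beta_0,a,\mu)\in(0,\infty)^5$ satisfying $$a\beta_0<\sqrt r,\qquad \phi_0<\frac{\beta_0A}{\mu+\frac ra}<1,\qquad \beta_0<1,$$ one has $$\frac{\partial\phi_0}{\partial a}>0,\qquad \frac{\partial\phi_0}{\partial \beta_0}>0,\qquad \frac{\partial\phi_0}{\partial \mu}>0,\qquad \frac{\partial\phi_0}{\partial r}<0.$$ *)

theory Defs
  imports "HOL-Analysis.Analysis"
begin

definition phi0 :: "real \<Rightarrow> real \<Rightarrow> real \<Rightarrow> real \<Rightarrow> real" where
  "phi0 a \<beta>0 r \<mu> = 1 - (a * \<beta>0 - sqrt r)\<^sup>2 / (a * \<mu> + r)"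

end

(* Write e = sqrt r - a b and D = a mu + r (b standing for beta0), so phi0 = 1 - e^2 / D.
   For e > 0 the partial derivatives in a, b and mu have evident signs. The one in r is
   e (e - D / sqrt r) / D^2, which is negative because e sqrt r = r - a b sqrt r < r < D. *)

theory Submission
  imports Defs
begin

lemma phi0_has_derivative_a:
  assumes "a * \<mu> + r \<noteq> 0"
  shows "((\<lambda>x. phi0 x b r \<mu>) has_real_derivative
    (2 * b * (sqrt r - a * b) * (a * \<mu> + r) + \<mu> * (sqrt r - a * b)\<^sup>2) / (a * \<mu> + r)\<^sup>2) (at a)"
  unfolding phi0_def
  apply (rule derivative_eq_intros refl assms)+
  using assms by (simp add: divide_simps power2_eq_square; simp add: algebra_simps)

lemma phi0_has_derivative_b:
  assumes "a * \<mu> + r \<noteq> 0"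
  shows "((\<lambda>x. phi0 a x r \<mu>) has_real_derivative 2 * a * (sqrt r - a * b) / (a * \<mu> + r)) (at b)"
  unfolding phi0_def
  apply (rule derivative_eq_intros refl assms)+
  using assms by (simp add: divide_simps power2_eq_square; simp add: algebra_simps)

lemma phi0_has_derivative_mu:
  assumes "a * \<mu> + r \<noteq> 0"
  shows "((\<lambda>x. phi0 a b r x) has_real_derivative a * (sqrt r - a * b)\<^sup>2 / (a * \<mu> + r)\<^sup>2) (at \<mu>)"
  unfolding phi0_def
  apply (rule derivative_eq_intros refl assms)+
  using assms by (simp add: divide_simps power2_eq_square; simp add: algebra_simps)

lemma phi0_has_derivative_r:
  assumes "r > 0" "a * \<mu> + r \<noteq> 0"
  shows "((\<lambda>x. phi0 a b x \<mu>) has_real_derivative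
    (sqrt r - a * b) * (sqrt r - a * b - (a * \<mu> + r) / sqrt r) / (a * \<mu> + r)\<^sup>2) (at r)"
  unfolding phi0_def
  apply (rule DERIV_real_sqrt derivative_eq_intros refl assms)+
  using assms by (simp add: divide_simps power2_eq_square; simp add: algebra_simps)

lemma phi0_deriv_a_pos:
  assumes "a > 0" "b > 0" "\<mu> > 0" "r > 0" "a * b < sqrt r"
  shows "deriv (\<lambda>x. phi0 x b r \<mu>) a > 0"
proof -
  have denom_pos: "a * \<mu> + r > 0" using assms by (simp add: add_pos_pos)
  have "2 * b * (sqrt r - a * b) * (a * \<mu> + r) + \<mu> * (sqrt r - a * b)\<^sup>2 > 0"
    using assms denom_pos by (intro add_pos_nonneg mult_pos_pos) auto
  then show ?thesis
    using DERIV_imp_deriv[OF phi0_has_derivative_a] denom_pos by simp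
qed

lemma phi0_deriv_b_pos:
  assumes "a > 0" "\<mu> > 0" "r > 0" "a * b < sqrt r"
  shows "deriv (\<lambda>x. phi0 a x r \<mu>) b > 0"
proof -
  have denom_pos: "a * \<mu> + r > 0" using assms by (simp add: add_pos_pos)
  then show ?thesis
    using DERIV_imp_deriv[OF phi0_has_derivative_b] assms by simp
qed

lemma phi0_deriv_mu_pos:
  assumes "a > 0" "\<mu> > 0" "r > 0" "a * b < sqrt r"
  shows "deriv (\<lambda>x. phi0 a b r x) \<mu> > 0"
proof -
  have denom_pos: "a * \<mu> + r > 0" using assms by (simp add: add_pos_pos)
  then show ?thesis
    using DERIV_imp_deriv[OF phi0_has_derivative_mu] assms by simp
qed

lemma phi0_deriv_r_neg:
  assumes "a > 0" "b > 0" "\<mu> > 0" "r > 0" "a * b < sqrt r"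
  shows "deriv (\<lambda>x. phi0 a b x \<mu>) r < 0"
proof -
  have denom_pos: "a * \<mu> + r > 0" using assms by (simp add: add_pos_pos)
  have "sqrt r * (sqrt r - a * b) < r"
    using assms by (simp add: right_diff_distrib)
  also have "\<dots> < a * \<mu> + r"
    using assms by simp
  finally have "sqrt r - a * b - (a * \<mu> + r) / sqrt r < 0"
    using assms by (simp add: field_simps)
  then have "(sqrt r - a * b) * (sqrt r - a * b - (a * \<mu> + r) / sqrt r) < 0"
    using assms by (simp add: mult_pos_neg)
  then show ?thesis
    using DERIV_imp_deriv[OF phi0_has_derivative_r] assms denom_pos by (simp add: divide_neg_pos)
qed

theorem lemma5p5:
  fixes A r \<beta>0 a \<mu> :: real
  assumes "A > 0" "r > 0" "\<beta>0 > 0" "a > 0" "\<mu> > 0"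
    and "a * \<beta>0 < sqrt r"
    and "phi0 a \<beta>0 r \<mu> < \<beta>0 * A / (\<mu> + r / a)"
    and "\<beta>0 * A / (\<mu> + r / a) < 1"
    and "\<beta>0 < 1"
  shows "deriv (\<lambda>x. phi0 x \<beta>0 r \<mu>) a > 0
    \<and> deriv (\<lambda>x. phi0 a x r \<mu>) \<beta>0 > 0
    \<and> deriv (\<lambda>x. phi0 a \<beta>0 r x) \<mu> > 0
    \<and> deriv (\<lambda>x. phi0 a \<beta>0 x \<mu>) r < 0"
  by (intro conjI phi0_deriv_a_pos phi0_deriv_b_pos phi0_deriv_mu_pos phi0_deriv_r_neg assms(2-6))

end
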